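(* Let $d\ge3$. There is no $n\in\mathbb{N}$ such that $\Phi^n$ is a mixed unitary channel for every unital quantum channel $\Phi:M_d\to M_d$.
   Context: A unital quantum channel on $M_d$ is a completely positive, unital, trace-preserving linear map. It is mixed unitary if it equals $\sum_{j=1}^\ell\lambda_j\mathrm{Ad}_{U_j}$ with unitaries $U_j\in M_d$, $\lambda_j\ge0$, $\sum_j\lambda_j=1$, where $\mathrm{Ad}_U(X)=U^*XU$. *)

theory Defs
  imports Complex_Main "Jordan_Normal_Form.Matrix"
begin

text \<open>Matrices in M_d are represented as complex d x d matrices (carrier_mat d d);
  a map on M_d is a function on complex matrices, only its behaviour on carrier_mat d d matters.\<close>

definition cadj :: "complex mat \<Rightarrow> complex mat" where
  "cadj A = mat (dim_col A) (dim_row A) (\<lambda>(i,j). cnj (A $$ (j,i)))"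

definition mtrace :: "complex mat \<Rightarrow> complex" where
  "mtrace A = (\<Sum>i<dim_row A. A $$ (i,i))"

definition unitary_mat :: "nat \<Rightarrow> complex mat \<Rightarrow> bool" where
  "unitary_mat d U \<longleftrightarrow> U \<in> carrier_mat d d \<and> cadj U * U = 1\<^sub>m d \<and> U * cadj U = 1\<^sub>m d"

definition psd :: "nat \<Rightarrow> complex mat \<Rightarrow> bool" where
  "psd n A \<longleftrightarrow> A \<in> carrier_mat n n \<and>
     (\<forall>x \<in> carrier_vec n. let q = map_vec cnj x \<bullet> (A *\<^sub>v x) in Im q = 0 \<and> Re q \<ge> 0)"

definition lin_map :: "nat \<Rightarrow> (complex mat \<Rightarrow> complex mat) \<Rightarrow> bool" where
  "lin_map d \<Phi> \<longleftrightarrow> (\<forall>X \<in> carrier_mat d d. \<Phi> X \<in> carrier_mat d d) \<and>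
     (\<forall>X \<in> carrier_mat d d. \<forall>Y \<in> carrier_mat d d. \<Phi> (X + Y) = \<Phi> X + \<Phi> Y) \<and>
     (\<forall>c. \<forall>X \<in> carrier_mat d d. \<Phi> (c \<cdot>\<^sub>m X) = c \<cdot>\<^sub>m \<Phi> X)"

text \<open>id_k \<otimes> \<Phi> acting on M_k(M_d) = M_{kd}: apply \<Phi> to each d x d block.\<close>
definition ampl :: "nat \<Rightarrow> nat \<Rightarrow> (complex mat \<Rightarrow> complex mat) \<Rightarrow> complex mat \<Rightarrow> complex mat" where
  "ampl k d \<Phi> X = mat (k*d) (k*d) (\<lambda>(r,c).
      \<Phi> (mat d d (\<lambda>(a,b). X $$ ((r div d) * d + a, (c div d) * d + b))) $$ (r mod d, c mod d))"

definition positive_map :: "nat \<Rightarrow> (complex mat \<Rightarrow> complex mat) \<Rightarrow> bool" where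
  "positive_map d \<Phi> \<longleftrightarrow> (\<forall>X. psd d X \<longrightarrow> psd d (\<Phi> X))"

definition completely_positive :: "nat \<Rightarrow> (complex mat \<Rightarrow> complex mat) \<Rightarrow> bool" where
  "completely_positive d \<Phi> \<longleftrightarrow> (\<forall>k\<ge>1. \<forall>X. psd (k*d) X \<longrightarrow> psd (k*d) (ampl k d \<Phi> X))"

definition unital_channel :: "nat \<Rightarrow> (complex mat \<Rightarrow> complex mat) \<Rightarrow> bool" where
  "unital_channel d \<Phi> \<longleftrightarrow> lin_map d \<Phi> \<and> completely_positive d \<Phi> \<and>
     \<Phi> (1\<^sub>m d) = 1\<^sub>m d \<and> (\<forall>X \<in> carrier_mat d d. mtrace (\<Phi> X) = mtrace X)"

definition mixed_unitary :: "nat \<Rightarrow> (complex mat \<Rightarrow> complex mat) \<Rightarrow> bool" where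
  "mixed_unitary d \<Phi> \<longleftrightarrow> (\<exists>l::nat. \<exists>lam::nat \<Rightarrow> real. \<exists>U::nat \<Rightarrow> complex mat.
     (\<forall>j<l. lam j \<ge> 0 \<and> unitary_mat d (U j)) \<and> (\<Sum>j<l. lam j) = 1 \<and>
     (\<forall>X \<in> carrier_mat d d.
        \<Phi> X = mat d d (\<lambda>(a,b). \<Sum>j<l. complex_of_real (lam j) * (cadj (U j) * X * U j) $$ (a,b))))"

end

(* The functional

     skew_witness d Psi = sum over a, b < 3 of Re (Psi(E_aa)_bb - Psi(E_ab)_ba)

   takes the value sum_j c_j skew_defect (M_j) on Psi = sum_j c_j Ad_(M_j), where skew_defect M
   is the sum of |M_ab - M_ba|^2 over the pairs a < b < 3.  For a unitary U the 3 x 3 block A of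
   U - U^T is antisymmetric and has operator norm at most 2, so |A^* A|_F^2 <= 4 |A|_F^2; since
   |A|_F^2 = 2 skew_defect U and |A^* A|_F^2 = 2 (skew_defect U)^2, this gives skew_defect U <= 4.
   Hence the functional is at most 4 on every mixed unitary channel.

   Let R(t) be the rotation by t in the (0,1)-plane and A_1, A_2, A_3 the standard basis of the
   antisymmetric 3 x 3 matrices.  The Kraus operators R(alpha) (weight 1 - e), A_s R(beta)
   (weight e/2 each) and the projection onto the coordinates >= 3 (weight e) form a unital
   channel.  Take alpha = pi/(2N) and beta = (1 - N) alpha.  In its N-th power the word
   R(alpha)^N = R(pi/2) contributes 4 (1 - e)^N, and each of the 3N words containing a single
   A_s is a conjugate R(t) A_s R(-t) and contributes 4 (e/2) (1 - e)^(N-1).  For e = 1/(3 N^2)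
   the total exceeds 4. *)

theory Submission
  imports Defs
begin

lemma index_mult_mat_sum:
  assumes "A \<in> carrier_mat n k" "B \<in> carrier_mat k m" "i < n" "j < m"
  shows "(A * B) $$ (i,j) = (\<Sum>l<k. A $$ (i,l) * B $$ (l,j))"
  using assms by (auto simp: scalar_prod_def lessThan_atLeast0 intro!: sum.cong)

lemma sum_lessThan_mult_split:
  fixes f :: "nat \<Rightarrow> 'a::comm_monoid_add"
  shows "(\<Sum>i<n*m. f i) = (\<Sum>u<n. \<Sum>s<m. f (u*m+s))"
proof -
  have "(\<Sum>i<n*m. f i) = (\<Sum>u<n. sum f {u*m..<u*m+m})"
    by (rule sum.nat_group[symmetric])
  also have "\<dots> = (\<Sum>u<n. \<Sum>s<m. f (u*m+s))"
  proof (rule sum.cong[OF refl])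
    fix u
    show "sum f {u*m..<u*m+m} = (\<Sum>s<m. f (u*m+s))"
      using sum.shift_bounds_nat_ivl[of f 0 "u*m" m] by (simp add: add.commute atLeast0LessThan)
  qed
  finally show ?thesis .
qed

lemma less_3_cases: "(i::nat) < 3 \<Longrightarrow> i = 0 \<or> i = 1 \<or> i = 2"
  by auto

lemma sum_lessThan_3: "(\<Sum>k<(3::nat). f k) = f 0 + f 1 + (f 2 :: 'a::comm_monoid_add)"
  by (simp add: numeral_3_eq_3 numeral_2_eq_2 add.assoc)

lemma sum_lessThan_5: "(\<Sum>s<(5::nat). f s) = f 0 + f 1 + f 2 + f 3 + (f 4 :: 'a::comm_monoid_add)"
  by (simp add: eval_nat_numeral add.assoc)

lemma square_mult_carrier_mat[simp]:
  "A \<in> carrier_mat d d \<Longrightarrow> B \<in> carrier_mat d d \<Longrightarrow> A * B \<in> carrier_mat d d"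
  by (rule mult_carrier_mat)

lemma cadj_carrier[simp]: "A \<in> carrier_mat n m \<Longrightarrow> cadj A \<in> carrier_mat m n"
  by (auto simp: cadj_def)

lemma dim_cadj[simp]: "dim_row (cadj A) = dim_col A" "dim_col (cadj A) = dim_row A"
  by (auto simp: cadj_def)

lemma index_cadj[simp]: "i < dim_col A \<Longrightarrow> j < dim_row A \<Longrightarrow> cadj A $$ (i,j) = cnj (A $$ (j,i))"
  by (auto simp: cadj_def)

lemma cadj_cadj[simp]: "cadj (cadj A) = A"
  by (rule eq_matI) auto

lemma cadj_one_mat[simp]: "cadj (1\<^sub>m d) = 1\<^sub>m d"
  by (rule eq_matI) auto

lemma cadj_mult:
  assumes "A \<in> carrier_mat n k" "B \<in> carrier_mat k m"
  shows "cadj (A * B) = cadj B * cadj A"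
proof (rule eq_matI)
  fix i j assume "i < dim_row (cadj B * cadj A)" "j < dim_col (cadj B * cadj A)"
  then have i: "i < m" and j: "j < n" using assms by auto
  have "cadj (A * B) $$ (i,j) = cnj ((A*B) $$ (j,i))" using assms i j by simp
  also have "\<dots> = (\<Sum>l<k. cnj (A $$ (j,l)) * cnj (B $$ (l,i)))"
    using index_mult_mat_sum[OF assms j i] by (simp add: cnj_sum)
  also have "\<dots> = (cadj B * cadj A) $$ (i,j)"
    using assms i j by (subst index_mult_mat_sum[of _ m k _ n]) (auto simp: mult.commute intro!: sum.cong)
  finally show "cadj (A * B) $$ (i,j) = (cadj B * cadj A) $$ (i,j)" .
qed (use assms in auto)

lemma index_sandwich:
  assumes M: "M \<in> carrier_mat d d" and X: "X \<in> carrier_mat d d" and ab: "a < d" "b < d"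
  shows "(cadj M * X * M) $$ (a,b) = (\<Sum>p<d. \<Sum>q<d. cnj (M $$ (p,a)) * X $$ (p,q) * M $$ (q,b))"
proof -
  have MX: "cadj M * X \<in> carrier_mat d d" using M X by simp
  have "(cadj M * X * M) $$ (a,b) = (\<Sum>q<d. (cadj M * X) $$ (a,q) * M $$ (q,b))"
    by (rule index_mult_mat_sum[OF MX M ab])
  also have "\<dots> = (\<Sum>q<d. (\<Sum>p<d. cnj (M $$ (p,a)) * X $$ (p,q)) * M $$ (q,b))"
    using M X ab by (intro sum.cong refl, subst index_mult_mat_sum[of _ d d _ d]) auto
  also have "\<dots> = (\<Sum>q<d. \<Sum>p<d. cnj (M $$ (p,a)) * X $$ (p,q) * M $$ (q,b))"
    by (simp add: sum_distrib_right)
  also have "\<dots> = (\<Sum>p<d. \<Sum>q<d. cnj (M $$ (p,a)) * X $$ (p,q) * M $$ (q,b))"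
    by (rule sum.swap)
  finally show ?thesis .
qed

lemma sandwich_mult:
  assumes "A \<in> carrier_mat d d" "B \<in> carrier_mat d d" "X \<in> carrier_mat d d"
  shows "cadj (A * B) * X * (A * B) = cadj B * (cadj A * X * A) * B"
  using assms by (simp add: cadj_mult[OF assms(1,2)] assoc_mult_mat[of _ d d _ d _ d])

lemma sum_swap4:
  "(\<Sum>a\<in>A. \<Sum>b\<in>B. \<Sum>p\<in>C. \<Sum>q\<in>D. f a b p q) = (\<Sum>p\<in>C. \<Sum>q\<in>D. \<Sum>a\<in>A. \<Sum>b\<in>B. f a b p q)"
proof -
  have "(\<Sum>a\<in>A. \<Sum>b\<in>B. \<Sum>p\<in>C. \<Sum>q\<in>D. f a b p q) = (\<Sum>a\<in>A. \<Sum>p\<in>C. \<Sum>b\<in>B. \<Sum>q\<in>D. f a b p q)"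
    by (rule sum.cong[OF refl], rule sum.swap)
  also have "\<dots> = (\<Sum>a\<in>A. \<Sum>p\<in>C. \<Sum>q\<in>D. \<Sum>b\<in>B. f a b p q)"
    by (rule sum.cong[OF refl], rule sum.cong[OF refl], rule sum.swap)
  also have "\<dots> = (\<Sum>p\<in>C. \<Sum>a\<in>A. \<Sum>q\<in>D. \<Sum>b\<in>B. f a b p q)"
    by (rule sum.swap)
  also have "\<dots> = (\<Sum>p\<in>C. \<Sum>q\<in>D. \<Sum>a\<in>A. \<Sum>b\<in>B. f a b p q)"
    by (rule sum.cong[OF refl], rule sum.swap)
  finally show ?thesis .
qed

section \<open>Kraus maps\<close>

definition kraus_map ::
    "nat \<Rightarrow> nat \<Rightarrow> (nat \<Rightarrow> real) \<Rightarrow> (nat \<Rightarrow> complex mat) \<Rightarrow> complex mat \<Rightarrow> complex mat" where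
  "kraus_map d m c M X =
     mat d d (\<lambda>(a,b). \<Sum>j<m. complex_of_real (c j) * (cadj (M j) * X * M j) $$ (a,b))"

lemma mixed_unitary_iff_kraus_map:
  "mixed_unitary d \<Phi> \<longleftrightarrow> (\<exists>l lam U. (\<forall>j<l. lam j \<ge> 0 \<and> unitary_mat d (U j)) \<and> (\<Sum>j<l. lam j) = 1 \<and>
     (\<forall>X \<in> carrier_mat d d. \<Phi> X = kraus_map d l lam U X))"
  unfolding mixed_unitary_def kraus_map_def ..

lemma kraus_map_carrier[simp]: "kraus_map d m c M X \<in> carrier_mat d d"
  by (simp add: kraus_map_def)

lemma dim_kraus_map[simp]: "dim_row (kraus_map d m c M X) = d" "dim_col (kraus_map d m c M X) = d"
  by (auto simp: kraus_map_def)

lemma index_kraus_map: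
  assumes "\<And>j. j < m \<Longrightarrow> M j \<in> carrier_mat d d" "X \<in> carrier_mat d d" "a < d" "b < d"
  shows "kraus_map d m c M X $$ (a,b) =
    (\<Sum>j<m. complex_of_real (c j) * (\<Sum>p<d. \<Sum>q<d. cnj (M j $$ (p,a)) * X $$ (p,q) * M j $$ (q,b)))"
  using assms by (simp add: kraus_map_def) (intro sum.cong refl arg_cong2[where f="(*)"] index_sandwich; auto)

lemma lin_map_kraus_map:
  assumes M: "\<And>j. j < m \<Longrightarrow> M j \<in> carrier_mat d d"
  shows "lin_map d (kraus_map d m c M)"
  unfolding lin_map_def
proof (intro conjI ballI allI)
  fix X Y :: "complex mat" assume X: "X \<in> carrier_mat d d" and Y: "Y \<in> carrier_mat d d"
  show "kraus_map d m c M (X + Y) = kraus_map d m c M X + kraus_map d m c M Y"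
  proof (rule eq_matI)
    fix a b assume "a < dim_row (kraus_map d m c M X + kraus_map d m c M Y)"
      "b < dim_col (kraus_map d m c M X + kraus_map d m c M Y)"
    with X Y show "kraus_map d m c M (X + Y) $$ (a,b) = (kraus_map d m c M X + kraus_map d m c M Y) $$ (a,b)"
      by (simp add: index_kraus_map[OF M] carrier_matD[OF X] carrier_matD[OF Y] ring_distribs sum.distrib)
  qed simp_all
next
  fix z :: complex and X :: "complex mat" assume X: "X \<in> carrier_mat d d"
  show "kraus_map d m c M (z \<cdot>\<^sub>m X) = z \<cdot>\<^sub>m kraus_map d m c M X"
  proof (rule eq_matI)
    fix a b assume "a < dim_row (z \<cdot>\<^sub>m kraus_map d m c M X)" "b < dim_col (z \<cdot>\<^sub>m kraus_map d m c M X)"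
    with X show "kraus_map d m c M (z \<cdot>\<^sub>m X) $$ (a,b) = (z \<cdot>\<^sub>m kraus_map d m c M X) $$ (a,b)"
      by (simp add: index_kraus_map[OF M] carrier_matD[OF X] sum_distrib_left mult_ac)
  qed simp_all
qed simp

lemma index_kraus_map_one_mat:
  assumes "a < d" "b < d" "\<And>j. j < m \<Longrightarrow> M j \<in> carrier_mat d d"
  shows "kraus_map d m c M (1\<^sub>m d) $$ (a,b) = (\<Sum>j<m. complex_of_real (c j) * (cadj (M j) * M j) $$ (a,b))"
proof -
  have "cadj (M j) * 1\<^sub>m d * M j = cadj (M j) * M j" if "j < m" for j
    using right_mult_one_mat[OF cadj_carrier[OF assms(3)[OF that]]] by simp
  then show ?thesis using assms(1,2) by (auto simp: kraus_map_def intro!: sum.cong)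
qed

lemma index_kraus_map_adjoint_one_mat:
  assumes M: "\<And>j. j < m \<Longrightarrow> M j \<in> carrier_mat d d" and "p < d" "q < d"
  shows "kraus_map d m c (\<lambda>j. cadj (M j)) (1\<^sub>m d) $$ (q,p)
    = (\<Sum>a<d. \<Sum>j<m. complex_of_real (c j) * (M j $$ (q,a) * cnj (M j $$ (p,a))))"
proof -
  have "kraus_map d m c (\<lambda>j. cadj (M j)) (1\<^sub>m d) $$ (q,p)
      = (\<Sum>j<m. complex_of_real (c j) * (cadj (cadj (M j)) * cadj (M j)) $$ (q,p))"
    using assms by (intro index_kraus_map_one_mat) auto
  also have "\<dots> = (\<Sum>j<m. \<Sum>a<d. complex_of_real (c j) * (M j $$ (q,a) * cnj (M j $$ (p,a))))"
  proof (intro sum.cong refl)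
    fix j assume "j \<in> {..<m}"
    then have Mj: "M j \<in> carrier_mat d d" using M by simp
    with assms(2,3) show "complex_of_real (c j) * (cadj (cadj (M j)) * cadj (M j)) $$ (q,p)
        = (\<Sum>a<d. complex_of_real (c j) * (M j $$ (q,a) * cnj (M j $$ (p,a))))"
      by (subst index_mult_mat_sum[of _ d d _ d]) (auto simp: sum_distrib_left carrier_matD[OF Mj])
  qed
  also have "\<dots> = (\<Sum>a<d. \<Sum>j<m. complex_of_real (c j) * (M j $$ (q,a) * cnj (M j $$ (p,a))))"
    by (rule sum.swap)
  finally show ?thesis .
qed

lemma mtrace_kraus_map:
  assumes M: "\<And>j. j < m \<Longrightarrow> M j \<in> carrier_mat d d" and X: "X \<in> carrier_mat d d"
    and tp: "kraus_map d m c (\<lambda>j. cadj (M j)) (1\<^sub>m d) = 1\<^sub>m d"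
  shows "mtrace (kraus_map d m c M X) = mtrace X"
proof -
  have gram: "(\<Sum>a<d. \<Sum>j<m. complex_of_real (c j) * (M j $$ (q,a) * cnj (M j $$ (p,a)))) = of_bool (q = p)"
    if "p < d" "q < d" for p q
  proof -
    have "(\<Sum>a<d. \<Sum>j<m. complex_of_real (c j) * (M j $$ (q,a) * cnj (M j $$ (p,a))))
        = kraus_map d m c (\<lambda>j. cadj (M j)) (1\<^sub>m d) $$ (q,p)"
      using M that by (rule index_kraus_map_adjoint_one_mat[symmetric])
    also have "\<dots> = of_bool (q = p)"
      using tp that by simp
    finally show ?thesis .
  qed
  have "mtrace (kraus_map d m c M X)
      = (\<Sum>a<d. \<Sum>j<m. \<Sum>p<d. \<Sum>q<d. complex_of_real (c j) * (cnj (M j $$ (p,a)) * X $$ (p,q) * M j $$ (q,a)))"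
    unfolding mtrace_def using M X by (simp add: index_kraus_map sum_distrib_left)
  also have "\<dots> = (\<Sum>p<d. \<Sum>q<d. \<Sum>a<d. \<Sum>j<m. complex_of_real (c j) * (cnj (M j $$ (p,a)) * X $$ (p,q) * M j $$ (q,a)))"
    by (rule sum_swap4)
  also have "\<dots> = (\<Sum>p<d. \<Sum>q<d. X $$ (p,q) * (\<Sum>a<d. \<Sum>j<m. complex_of_real (c j) * (M j $$ (q,a) * cnj (M j $$ (p,a)))))"
    by (simp add: sum_distrib_left mult_ac)
  also have "\<dots> = mtrace X"
    unfolding mtrace_def using X by (simp add: gram of_bool_def if_distrib cong: if_cong)
  finally show ?thesis .
qed

definition quad_form :: "nat \<Rightarrow> complex mat \<Rightarrow> (nat \<Rightarrow> complex) \<Rightarrow> complex" where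
  "quad_form n A x = (\<Sum>i<n. \<Sum>j<n. cnj (x i) * A $$ (i,j) * x j)"

lemma scalar_prod_mult_mat_vec_quad_form:
  assumes "A \<in> carrier_mat n n" "x \<in> carrier_vec n"
  shows "map_vec cnj x \<bullet> (A *\<^sub>v x) = quad_form n A (\<lambda>i. x $ i)"
  using assms unfolding quad_form_def
  by (auto simp: scalar_prod_def lessThan_atLeast0 sum_distrib_left mult.assoc intro!: sum.cong)

lemma psd_iff_quad_form:
  "psd n A \<longleftrightarrow> A \<in> carrier_mat n n \<and> (\<forall>x. Im (quad_form n A x) = 0 \<and> Re (quad_form n A x) \<ge> 0)"
proof
  assume p: "psd n A"
  then have A: "A \<in> carrier_mat n n" by (simp add: psd_def)
  show "A \<in> carrier_mat n n \<and> (\<forall>x. Im (quad_form n A x) = 0 \<and> Re (quad_form n A x) \<ge> 0)"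
  proof (intro conjI allI A)
    fix x :: "nat \<Rightarrow> complex"
    have v: "vec n x \<in> carrier_vec n" by simp
    have "quad_form n A (\<lambda>i. vec n x $ i) = quad_form n A x"
      unfolding quad_form_def by (auto intro!: sum.cong)
    with p v show "Im (quad_form n A x) = 0" "Re (quad_form n A x) \<ge> 0"
      using scalar_prod_mult_mat_vec_quad_form[OF A v] unfolding psd_def Let_def by metis+
  qed
next
  assume "A \<in> carrier_mat n n \<and> (\<forall>x. Im (quad_form n A x) = 0 \<and> Re (quad_form n A x) \<ge> 0)"
  then show "psd n A" unfolding psd_def Let_def using scalar_prod_mult_mat_vec_quad_form by auto
qed

lemma psd_sandwich:
  assumes X: "psd n X" and N: "N \<in> carrier_mat n n"
  shows "psd n (cadj N * X * N)"
proof -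
  have Xc: "X \<in> carrier_mat n n" using X by (simp add: psd_def)
  have "quad_form n (cadj N * X * N) x = quad_form n X (\<lambda>p. \<Sum>r<n. N $$ (p,r) * x r)" for x
  proof -
    have "quad_form n (cadj N * X * N) x
        = (\<Sum>r<n. \<Sum>c<n. cnj (x r) * (\<Sum>p<n. \<Sum>q<n. cnj (N $$ (p,r)) * X $$ (p,q) * N $$ (q,c)) * x c)"
      unfolding quad_form_def using N Xc by (intro sum.cong refl) (subst index_sandwich[OF N Xc]; auto)
    also have "\<dots> = (\<Sum>r<n. \<Sum>c<n. \<Sum>p<n. \<Sum>q<n. cnj (N $$ (p,r) * x r) * X $$ (p,q) * (N $$ (q,c) * x c))"
      by (simp add: sum_distrib_left sum_distrib_right mult_ac)
    also have "\<dots> = (\<Sum>p<n. \<Sum>q<n. \<Sum>r<n. \<Sum>c<n. cnj (N $$ (p,r) * x r) * X $$ (p,q) * (N $$ (q,c) * x c))"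
      by (rule sum_swap4)
    also have "\<dots> = quad_form n X (\<lambda>p. \<Sum>r<n. N $$ (p,r) * x r)"
      unfolding quad_form_def by (simp add: cnj_sum sum_distrib_left sum_distrib_right mult_ac)
    finally show ?thesis .
  qed
  then show ?thesis using X N Xc unfolding psd_iff_quad_form by auto
qed

lemma psd_nonneg_combination:
  assumes "\<And>j. j < m \<Longrightarrow> psd n (A j)" "\<And>j. j < m \<Longrightarrow> c j \<ge> 0"
  shows "psd n (mat n n (\<lambda>(a,b). \<Sum>j<m. complex_of_real (c j) * A j $$ (a,b)))"
proof -
  have combination: "quad_form n (mat n n (\<lambda>(a,b). \<Sum>j<m. complex_of_real (c j) * A j $$ (a,b))) x
        = (\<Sum>j<m. complex_of_real (c j) * quad_form n (A j) x)" for x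
  proof -
    have "quad_form n (mat n n (\<lambda>(a,b). \<Sum>j<m. complex_of_real (c j) * A j $$ (a,b))) x
       = (\<Sum>i<n. \<Sum>k<n. \<Sum>j<m. complex_of_real (c j) * (cnj (x i) * A j $$ (i,k) * x k))"
      unfolding quad_form_def by (simp add: sum_distrib_left sum_distrib_right mult_ac)
    also have "\<dots> = (\<Sum>j<m. \<Sum>i<n. \<Sum>k<n. complex_of_real (c j) * (cnj (x i) * A j $$ (i,k) * x k))"
      by (subst sum.swap, rule sum.cong[OF refl], rule sum.swap)
    also have "\<dots> = (\<Sum>j<m. complex_of_real (c j) * quad_form n (A j) x)"
      unfolding quad_form_def by (simp add: sum_distrib_left)
    finally show ?thesis .
  qed
  have "Im (quad_form n (A j) x) = 0 \<and> Re (quad_form n (A j) x) \<ge> 0" if "j < m" for j x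
    using assms(1)[OF that] psd_iff_quad_form by blast
  with assms(2) show ?thesis
    unfolding psd_iff_quad_form combination by (auto simp: Im_sum Re_sum intro!: sum_nonneg)
qed

definition block_diag :: "nat \<Rightarrow> nat \<Rightarrow> complex mat \<Rightarrow> complex mat" where
  "block_diag k d M = mat (k*d) (k*d) (\<lambda>(r,s). if r div d = s div d then M $$ (r mod d, s mod d) else 0)"

lemma block_diag_carrier[simp]: "block_diag k d M \<in> carrier_mat (k*d) (k*d)"
  by (simp add: block_diag_def)

lemma sum_if_div_eq:
  fixes f :: "nat \<Rightarrow> 'a::comm_monoid_add"
  assumes "u < k"
  shows "(\<Sum>r<k*d. if r div d = u then f r else 0) = (\<Sum>p<d. f (u*d+p))"
proof -
  have "(\<Sum>r<k*d. if r div d = u then f r else 0) = (\<Sum>v<k. \<Sum>p<d. if (v*d+p) div d = u then f (v*d+p) else 0)"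
    by (rule sum_lessThan_mult_split)
  also have "\<dots> = (\<Sum>v<k. if v = u then (\<Sum>p<d. f (v*d+p)) else 0)"
    by (intro sum.cong refl) auto
  also have "\<dots> = (\<Sum>p<d. f (u*d+p))"
    using assms by simp
  finally show ?thesis .
qed

lemma index_sandwich_block_diag:
  assumes M: "M \<in> carrier_mat d d" and X: "X \<in> carrier_mat (k*d) (k*d)" and "r < k*d" "s < k*d"
  shows "(cadj (block_diag k d M) * X * block_diag k d M) $$ (r,s)
    = (\<Sum>p<d. \<Sum>q<d. cnj (M $$ (p, r mod d)) * X $$ ((r div d)*d+p, (s div d)*d+q) * M $$ (q, s mod d))"
proof -
  have u: "r div d < k" and v: "s div d < k"
    using assms(3,4) by (simp_all add: less_mult_imp_div_less)
  let ?B = "block_diag k d M"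
  have "(cadj ?B * X * ?B) $$ (r,s) = (\<Sum>P<k*d. \<Sum>Q<k*d. cnj (?B $$ (P,r)) * X $$ (P,Q) * ?B $$ (Q,s))"
    by (rule index_sandwich[OF block_diag_carrier X assms(3,4)])
  also have "\<dots> = (\<Sum>P<k*d. if P div d = r div d then (\<Sum>Q<k*d. if Q div d = s div d then
           cnj (M $$ (P mod d, r mod d)) * X $$ (P,Q) * M $$ (Q mod d, s mod d) else 0) else 0)"
    using assms(3,4) by (intro sum.cong refl) (auto simp: block_diag_def intro!: sum.cong)
  also have "\<dots> = (\<Sum>p<d. \<Sum>q<d. cnj (M $$ (p, r mod d)) * X $$ ((r div d)*d+p, (s div d)*d+q) * M $$ (q, s mod d))"
    by (simp add: sum_if_div_eq[OF u] sum_if_div_eq[OF v])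
  finally show ?thesis .
qed

lemma ampl_kraus_map:
  assumes X: "X \<in> carrier_mat (k*d) (k*d)" and M: "\<And>j. j < m \<Longrightarrow> M j \<in> carrier_mat d d"
  shows "ampl k d (kraus_map d m c M) X = kraus_map (k*d) m c (\<lambda>j. block_diag k d (M j)) X"
proof (rule eq_matI)
  fix r s assume "r < dim_row (kraus_map (k*d) m c (\<lambda>j. block_diag k d (M j)) X)"
    "s < dim_col (kraus_map (k*d) m c (\<lambda>j. block_diag k d (M j)) X)"
  then have r: "r < k*d" and s: "s < k*d" by auto
  then have "d > 0" by (cases d) auto
  define B where "B = mat d d (\<lambda>(a,b). X $$ ((r div d) * d + a, (s div d) * d + b))"
  have "ampl k d (kraus_map d m c M) X $$ (r,s) = kraus_map d m c M B $$ (r mod d, s mod d)"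
    using r s by (simp add: ampl_def B_def)
  also have "\<dots> = (\<Sum>j<m. complex_of_real (c j) * (\<Sum>p<d. \<Sum>q<d.
      cnj (M j $$ (p, r mod d)) * X $$ ((r div d)*d+p, (s div d)*d+q) * M j $$ (q, s mod d)))"
    using \<open>d > 0\<close> M by (simp add: index_kraus_map B_def)
  also have "\<dots> = kraus_map (k*d) m c (\<lambda>j. block_diag k d (M j)) X $$ (r,s)"
    unfolding kraus_map_def using r s M X by (simp add: index_sandwich_block_diag)
  finally show "ampl k d (kraus_map d m c M) X $$ (r,s) = kraus_map (k*d) m c (\<lambda>j. block_diag k d (M j)) X $$ (r,s)" .
qed (auto simp: ampl_def)

lemma completely_positive_kraus_map:
  assumes M: "\<And>j. j < m \<Longrightarrow> M j \<in> carrier_mat d d" and c: "\<And>j. j < m \<Longrightarrow> c j \<ge> 0"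
  shows "completely_positive d (kraus_map d m c M)"
  unfolding completely_positive_def
proof (intro allI impI)
  fix k :: nat and X assume X: "psd (k*d) X"
  then have "X \<in> carrier_mat (k*d) (k*d)" by (simp add: psd_def)
  moreover have "psd (k*d) (kraus_map (k*d) m c (\<lambda>j. block_diag k d (M j)) X)"
    unfolding kraus_map_def by (rule psd_nonneg_combination[OF psd_sandwich[OF X block_diag_carrier] c])
  ultimately show "psd (k*d) (ampl k d (kraus_map d m c M) X)"
    using ampl_kraus_map M by simp
qed

lemma unital_channel_kraus_map:
  assumes M: "\<And>j. j < m \<Longrightarrow> M j \<in> carrier_mat d d" and c: "\<And>j. j < m \<Longrightarrow> c j \<ge> 0"
    and unital: "kraus_map d m c M (1\<^sub>m d) = 1\<^sub>m d"
    and trace_preserving: "kraus_map d m c (\<lambda>j. cadj (M j)) (1\<^sub>m d) = 1\<^sub>m d"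
  shows "unital_channel d (kraus_map d m c M)"
  unfolding unital_channel_def
proof (intro conjI ballI unital)
  show "lin_map d (kraus_map d m c M)" using M by (rule lin_map_kraus_map)
  show "completely_positive d (kraus_map d m c M)" using M c by (rule completely_positive_kraus_map)
  show "mtrace (kraus_map d m c M X) = mtrace X" if "X \<in> carrier_mat d d" for X
    using M that trace_preserving by (rule mtrace_kraus_map)
qed

section \<open>Powers of Kraus maps\<close>

lemma index_sandwich_kraus_map:
  assumes M: "M \<in> carrier_mat d d" and K: "\<And>u. u < n \<Longrightarrow> K u \<in> carrier_mat d d"
    and X: "X \<in> carrier_mat d d" and ab: "a < d" "b < d"
  shows "(cadj M * kraus_map d n c K X * M) $$ (a,b)
    = (\<Sum>u<n. complex_of_real (c u) * (cadj M * (cadj (K u) * X * K u) * M) $$ (a,b))"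
proof -
  have KXK: "cadj (K u) * X * K u \<in> carrier_mat d d" if "u < n" for u
    using K[OF that] X by simp
  have "(cadj M * kraus_map d n c K X * M) $$ (a,b)
      = (\<Sum>p<d. \<Sum>q<d. cnj (M $$ (p,a)) * kraus_map d n c K X $$ (p,q) * M $$ (q,b))"
    by (rule index_sandwich[OF M kraus_map_carrier ab])
  also have "\<dots> = (\<Sum>p<d. \<Sum>q<d. \<Sum>u<n. complex_of_real (c u) *
      (cnj (M $$ (p,a)) * (cadj (K u) * X * K u) $$ (p,q) * M $$ (q,b)))"
    by (intro sum.cong refl) (simp add: kraus_map_def sum_distrib_left sum_distrib_right mult_ac)
  also have "\<dots> = (\<Sum>u<n. \<Sum>p<d. \<Sum>q<d. complex_of_real (c u) *
      (cnj (M $$ (p,a)) * (cadj (K u) * X * K u) $$ (p,q) * M $$ (q,b)))"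
    by (subst sum.swap, rule sum.cong[OF refl], rule sum.swap)
  also have "\<dots> = (\<Sum>u<n. complex_of_real (c u) * (cadj M * (cadj (K u) * X * K u) * M) $$ (a,b))"
    by (intro sum.cong refl) (simp add: index_sandwich[OF M KXK ab] sum_distrib_left)
  finally show ?thesis .
qed

lemma kraus_map_kraus_map:
  assumes K: "\<And>s. s < m \<Longrightarrow> K s \<in> carrier_mat d d" and L: "\<And>u. u < n \<Longrightarrow> L u \<in> carrier_mat d d"
    and X: "X \<in> carrier_mat d d"
  shows "kraus_map d m c K (kraus_map d n w L X)
    = kraus_map d (n*m) (\<lambda>i. w (i div m) * c (i mod m)) (\<lambda>i. L (i div m) * K (i mod m)) X"
proof (rule eq_matI)
  fix a b assume "a < dim_row (kraus_map d (n*m) (\<lambda>i. w (i div m) * c (i mod m)) (\<lambda>i. L (i div m) * K (i mod m)) X)"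
    "b < dim_col (kraus_map d (n*m) (\<lambda>i. w (i div m) * c (i mod m)) (\<lambda>i. L (i div m) * K (i mod m)) X)"
  then have a: "a < d" and b: "b < d" by auto
  have "kraus_map d m c K (kraus_map d n w L X) $$ (a,b)
      = (\<Sum>s<m. complex_of_real (c s) * (cadj (K s) * kraus_map d n w L X * K s) $$ (a,b))"
    using a b by (simp add: kraus_map_def)
  also have "\<dots> = (\<Sum>s<m. \<Sum>u<n. complex_of_real (w u * c s) * (cadj (L u * K s) * X * (L u * K s)) $$ (a,b))"
  proof (intro sum.cong refl)
    fix s assume "s \<in> {..<m}"
    then have Ks: "K s \<in> carrier_mat d d" using K by simp
    show "complex_of_real (c s) * (cadj (K s) * kraus_map d n w L X * K s) $$ (a,b)
        = (\<Sum>u<n. complex_of_real (w u * c s) * (cadj (L u * K s) * X * (L u * K s)) $$ (a,b))"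
      using index_sandwich_kraus_map[OF Ks L X a b]
      by (simp add: sandwich_mult[OF L Ks X] sum_distrib_left mult_ac)
  qed
  also have "\<dots> = (\<Sum>u<n. \<Sum>s<m. complex_of_real (w u * c s) * (cadj (L u * K s) * X * (L u * K s)) $$ (a,b))"
    by (rule sum.swap)
  also have "\<dots> = kraus_map d (n*m) (\<lambda>i. w (i div m) * c (i mod m)) (\<lambda>i. L (i div m) * K (i mod m)) X $$ (a,b)"
    using a b by (simp add: kraus_map_def sum_lessThan_mult_split)
  finally show "kraus_map d m c K (kraus_map d n w L X) $$ (a,b)
      = kraus_map d (n*m) (\<lambda>i. w (i div m) * c (i mod m)) (\<lambda>i. L (i div m) * K (i mod m)) X $$ (a,b)" .
qed simp_all

text \<open>The index \<open>u < m\<^sup>n\<close> encodes the word whose letters are the base-\<open>m\<close> digits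
  \<open>u\<^sub>n\<^sub>-\<^sub>1 \<dots> u\<^sub>0\<close> of \<open>u\<close>; its Kraus operator is \<open>K u\<^sub>n\<^sub>-\<^sub>1 * \<dots> * K u\<^sub>0\<close>.\<close>

primrec word_mat :: "nat \<Rightarrow> nat \<Rightarrow> (nat \<Rightarrow> complex mat) \<Rightarrow> nat \<Rightarrow> nat \<Rightarrow> complex mat" where
  "word_mat d m K 0 u = 1\<^sub>m d"
| "word_mat d m K (Suc n) u = word_mat d m K n (u div m) * K (u mod m)"

primrec word_weight :: "nat \<Rightarrow> (nat \<Rightarrow> real) \<Rightarrow> nat \<Rightarrow> nat \<Rightarrow> real" where
  "word_weight m c 0 u = 1"
| "word_weight m c (Suc n) u = word_weight m c n (u div m) * c (u mod m)"

lemma word_mat_carrier: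
  assumes "\<And>j. j < m \<Longrightarrow> K j \<in> carrier_mat d d" "m > 0"
  shows "word_mat d m K n u \<in> carrier_mat d d"
  using assms by (induction n arbitrary: u) auto

lemma funpow_kraus_map:
  assumes K: "\<And>j. j < m \<Longrightarrow> K j \<in> carrier_mat d d" and m: "m > 0" and X: "X \<in> carrier_mat d d"
  shows "(kraus_map d m c K ^^ n) X = kraus_map d (m^n) (word_weight m c n) (word_mat d m K n) X"
proof (induction n)
  case 0
  show ?case
    using X by (intro eq_matI) (auto simp: kraus_map_def)
next
  case (Suc n)
  have "(kraus_map d m c K ^^ Suc n) X = kraus_map d m c K (kraus_map d (m^n) (word_weight m c n) (word_mat d m K n) X)"
    using Suc.IH by simp
  also have "\<dots> = kraus_map d (m^n*m) (\<lambda>i. word_weight m c n (i div m) * c (i mod m))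
      (\<lambda>i. word_mat d m K n (i div m) * K (i mod m)) X"
    using K X word_mat_carrier[of m K d, OF _ m] by (intro kraus_map_kraus_map) auto
  also have "\<dots> = kraus_map d (m^Suc n) (word_weight m c (Suc n)) (word_mat d m K (Suc n)) X"
  proof -
    have "word_weight m c (Suc n) = (\<lambda>i. word_weight m c n (i div m) * c (i mod m))"
      "word_mat d m K (Suc n) = (\<lambda>i. word_mat d m K n (i div m) * K (i mod m))"
      by auto
    then show ?thesis by (simp only: power_Suc2)
  qed
  finally show ?case .
qed

lemma word_weight_nonneg:
  assumes "\<And>s. s < m \<Longrightarrow> 0 \<le> c s" "0 < m"
  shows "0 \<le> word_weight m c n u"
  using assms by (induction n arbitrary: u) auto

lemma word_mat_zero:
  assumes "K 0 \<in> carrier_mat d d"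
  shows "word_mat d m K n 0 = K 0 ^\<^sub>m n"
  using assms by (induction n) auto

lemma word_weight_zero: "word_weight m c n 0 = c 0 ^ n"
  by (induction n) auto

lemma word_mat_single_letter:
  assumes K: "\<And>j. j < m \<Longrightarrow> K j \<in> carrier_mat d d" and j: "j < m" and "q < n"
  shows "word_mat d m K n (j * m^q) = K 0 ^\<^sub>m (n - 1 - q) * K j * K 0 ^\<^sub>m q"
  using \<open>q < n\<close>
proof (induction n arbitrary: q)
  case (Suc n)
  have K0: "K 0 \<in> carrier_mat d d" and Kj: "K j \<in> carrier_mat d d" using K j by auto
  show ?case
  proof (cases q)
    case 0
    then show ?thesis using K0 Kj j by (simp add: word_mat_zero)
  next
    case (Suc q')
    then have "q' < n" using Suc.prems by simp
    moreover have "j * m^q div m = j * m^q'" "j * m^q mod m = 0" using \<open>q = Suc q'\<close> j by auto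
    ultimately show ?thesis using \<open>q = Suc q'\<close> Suc.IH K0 Kj by (simp add: assoc_mult_mat[of _ d d _ d _ d])
  qed
qed simp

lemma word_weight_single_letter:
  assumes "j < m" "q < n"
  shows "word_weight m c n (j * m^q) = c 0 ^ (n - 1) * c j"
  using assms(2)
proof (induction n arbitrary: q)
  case (Suc n)
  show ?case
  proof (cases q)
    case 0
    then show ?thesis using assms(1) by (simp add: word_weight_zero)
  next
    case (Suc q')
    then have "q' < n" "j * m^q div m = j * m^q'" "j * m^q mod m = 0" using Suc.prems assms(1) by auto
    then show ?thesis using \<open>q = Suc q'\<close> Suc.IH by (cases n) auto
  qed
qed simp

lemma digit_mult_power_eq_imp_eq:
  fixes m :: nat
  assumes "0 < j" "j < m" "0 < j'" "j' < m" "j * m^q = j' * m^q'" "q \<le> q'"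
  shows "q = q' \<and> j = j'"
proof -
  have "j * m^q = (j' * m^(q' - q)) * m^q"
    using assms(5,6) by (simp add: power_add[symmetric])
  then have jj': "j = j' * m^(q' - q)"
    using assms(2) by simp
  have "q' - q = 0"
  proof (rule ccontr)
    assume "q' - q \<noteq> 0"
    then have "m \<le> m^(q' - q)" using assms(2) by (simp add: self_le_power)
    also have "\<dots> \<le> j" using jj' assms(3) by simp
    finally show False using assms(2) by simp
  qed
  then show ?thesis using jj' assms(6) by simp
qed

lemma sum_words_ge_single_letters:
  fixes f :: "nat \<Rightarrow> real"
  assumes m: "0 < m" and f: "\<And>u. u < m^n \<Longrightarrow> f u \<ge> 0" and J: "J \<subseteq> {1..<m}"
  shows "f 0 + (\<Sum>q<n. \<Sum>j\<in>J. f (j * m^q)) \<le> (\<Sum>u<m^n. f u)"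
proof -
  let ?g = "\<lambda>(q,j). j * m^q"
  have finJ: "finite J" using J finite_subset by blast
  have inj: "inj_on ?g ({..<n} \<times> J)"
  proof (rule inj_onI, clarify)
    fix q j q' j' assume "j \<in> J" "j' \<in> J" and eq: "j * m^q = j' * m^q'"
    then have "0 < j" "j < m" "0 < j'" "j' < m" using J by auto
    with eq show "q = q' \<and> j = j'"
      using digit_mult_power_eq_imp_eq[of j m j' q q'] digit_mult_power_eq_imp_eq[of j' m j q' q]
      by (cases "q \<le> q'") auto
  qed
  have sub: "insert 0 (?g ` ({..<n} \<times> J)) \<subseteq> {..<m^n}"
  proof -
    have "j * m^q < m^n" if "q < n" "j \<in> J" for q j
    proof -
      have "j * m^q < m * m^q" using that J by auto
      also have "\<dots> \<le> m^n" using that J by (auto intro: power_increasing simp flip: power_Suc)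
      finally show ?thesis .
    qed
    moreover have "0 < m^n" using m by simp
    ultimately show ?thesis by auto
  qed
  have "0 \<notin> ?g ` ({..<n} \<times> J)" using J by auto
  then have "f 0 + (\<Sum>q<n. \<Sum>j\<in>J. f (j * m^q)) = sum f (insert 0 (?g ` ({..<n} \<times> J)))"
    using finJ inj by (simp add: sum.reindex sum.cartesian_product prod.case_distrib)
  also have "\<dots> \<le> (\<Sum>u<m^n. f u)"
    using sub f by (intro sum_mono2) auto
  finally show ?thesis .
qed

section \<open>A functional bounded by 4 on mixed unitary channels\<close>

definition elem_mat :: "nat \<Rightarrow> nat \<Rightarrow> nat \<Rightarrow> complex mat" where
  "elem_mat d a b = mat d d (\<lambda>(i,j). if i = a \<and> j = b then 1 else 0)"

definition skew_defect :: "complex mat \<Rightarrow> real" where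
  "skew_defect M = (cmod (M $$ (0,1) - M $$ (1,0)))\<^sup>2 + (cmod (M $$ (0,2) - M $$ (2,0)))\<^sup>2
     + (cmod (M $$ (1,2) - M $$ (2,1)))\<^sup>2"

definition skew_witness :: "nat \<Rightarrow> (complex mat \<Rightarrow> complex mat) \<Rightarrow> real" where
  "skew_witness d \<Psi> = (\<Sum>a<3. \<Sum>b<3. Re (\<Psi> (elem_mat d a a) $$ (b,b) - \<Psi> (elem_mat d a b) $$ (b,a)))"

lemma elem_mat_carrier[simp]: "elem_mat d a b \<in> carrier_mat d d"
  by (simp add: elem_mat_def)

lemma skew_defect_nonneg: "skew_defect M \<ge> 0"
  by (simp add: skew_defect_def)

lemma index_sandwich_elem_mat:
  assumes M: "M \<in> carrier_mat d d" and "a < d" "b < d" "p < d" "q < d"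
  shows "(cadj M * elem_mat d a b * M) $$ (p,q) = cnj (M $$ (a,p)) * M $$ (b,q)"
proof -
  have "(cadj M * elem_mat d a b * M) $$ (p,q)
      = (\<Sum>p'<d. \<Sum>q'<d. cnj (M $$ (p',p)) * elem_mat d a b $$ (p',q') * M $$ (q',q))"
    by (rule index_sandwich[OF M _ assms(4,5)]) (simp add: elem_mat_def)
  also have "\<dots> = (\<Sum>p'<d. of_bool (p' = a) * (\<Sum>q'<d. of_bool (q' = b) * (cnj (M $$ (p',p)) * M $$ (q',q))))"
    unfolding sum_distrib_left by (intro sum.cong refl) (auto simp: elem_mat_def)
  also have "\<dots> = cnj (M $$ (a,p)) * M $$ (b,q)"
    using assms(2,3) by simp
  finally show ?thesis .
qed

lemma skew_defect_eq_sum: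
  "skew_defect M = (\<Sum>a<3. \<Sum>b<3. Re (cnj (M $$ (a,b)) * (M $$ (a,b) - M $$ (b,a))))"
proof -
  have pair: "Re (cnj x * (x - y)) + Re (cnj y * (y - x)) = (cmod (x - y))\<^sup>2" for x y :: complex
    unfolding cmod_power2 by (simp add: power2_eq_square algebra_simps)
  show ?thesis
    unfolding sum_lessThan_3 skew_defect_def
    using pair[of "M $$ (0,1)" "M $$ (1,0)"] pair[of "M $$ (0,2)" "M $$ (2,0)"] pair[of "M $$ (1,2)" "M $$ (2,1)"]
    by simp
qed

lemma skew_witness_kraus_map:
  assumes d: "3 \<le> d" and M: "\<And>j. j < m \<Longrightarrow> M j \<in> carrier_mat d d"
    and \<Psi>: "\<And>X. X \<in> carrier_mat d d \<Longrightarrow> \<Psi> X = kraus_map d m c M X"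
  shows "skew_witness d \<Psi> = (\<Sum>j<m. c j * skew_defect (M j))"
proof -
  have "skew_witness d \<Psi> = (\<Sum>a<3. \<Sum>b<3. \<Sum>j<m. c j * Re (cnj (M j $$ (a,b)) * (M j $$ (a,b) - M j $$ (b,a))))"
    unfolding skew_witness_def
  proof (intro sum.cong refl)
    fix a b :: nat assume "a \<in> {..<3}" "b \<in> {..<3}"
    then have "a < d" "b < d" using d by auto
    with M have "\<Psi> (elem_mat d a a) $$ (b,b) - \<Psi> (elem_mat d a b) $$ (b,a)
        = (\<Sum>j<m. complex_of_real (c j) * (cnj (M j $$ (a,b)) * (M j $$ (a,b) - M j $$ (b,a))))"
      by (simp add: \<Psi> kraus_map_def index_sandwich_elem_mat
          sum_subtractf[symmetric] algebra_simps)
    then show "Re (\<Psi> (elem_mat d a a) $$ (b,b) - \<Psi> (elem_mat d a b) $$ (b,a))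
        = (\<Sum>j<m. c j * Re (cnj (M j $$ (a,b)) * (M j $$ (a,b) - M j $$ (b,a))))"
      by (simp add: Re_sum)
  qed
  also have "\<dots> = (\<Sum>j<m. c j * skew_defect (M j))"
    unfolding skew_defect_eq_sum sum_distrib_left
    by (subst sum.swap, rule sum.cong[OF refl], rule sum.swap)
  finally show ?thesis .
qed

lemma sum_cmod_sq_orthonormal:
  fixes G :: "nat \<Rightarrow> nat \<Rightarrow> complex"
  assumes G: "\<And>a a'. a < k \<Longrightarrow> a' < k \<Longrightarrow> (\<Sum>b<d. G b a * cnj (G b a')) = (if a = a' then 1 else 0)"
  shows "(\<Sum>b<d. (cmod (\<Sum>a<k. G b a * w a))\<^sup>2) = (\<Sum>a<k. (cmod (w a))\<^sup>2)"
proof -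
  have "complex_of_real (\<Sum>b<d. (cmod (\<Sum>a<k. G b a * w a))\<^sup>2)
      = (\<Sum>b<d. (\<Sum>a<k. G b a * w a) * cnj (\<Sum>a<k. G b a * w a))"
    by (simp only: of_real_sum complex_norm_square)
  also have "\<dots> = (\<Sum>b<d. \<Sum>a<k. \<Sum>a'<k. G b a * w a * (cnj (G b a') * cnj (w a')))"
    by (simp add: cnj_sum sum_product)
  also have "\<dots> = (\<Sum>a<k. \<Sum>a'<k. \<Sum>b<d. G b a * w a * (cnj (G b a') * cnj (w a')))"
    by (subst sum.swap, rule sum.cong[OF refl], rule sum.swap)
  also have "\<dots> = (\<Sum>a<k. \<Sum>a'<k. w a * cnj (w a') * (\<Sum>b<d. G b a * cnj (G b a')))"
    by (simp add: sum_distrib_left mult_ac)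
  also have "\<dots> = (\<Sum>a<k. w a * cnj (w a))"
    by (simp add: G if_distrib cong: if_cong)
  also have "\<dots> = complex_of_real (\<Sum>a<k. (cmod (w a))\<^sup>2)"
    by (simp only: of_real_sum complex_norm_square)
  finally show ?thesis by (simp only: of_real_eq_iff)
qed

lemma cmod_diff_sq_le: "(cmod (p - q))\<^sup>2 \<le> 2 * (cmod p)\<^sup>2 + 2 * (cmod q)\<^sup>2"
proof -
  have "(cmod (p - q))\<^sup>2 \<le> (cmod p + cmod q)\<^sup>2"
    by (simp add: power_mono norm_triangle_ineq4)
  also have "\<dots> \<le> 2 * (cmod p)\<^sup>2 + 2 * (cmod q)\<^sup>2"
    using sum_squares_ge_zero[of "cmod p - cmod q" 0] by (simp add: power2_eq_square algebra_simps)
  finally show ?thesis .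
qed

text \<open>With \<open>A\<close> the 3 x 3 block of \<open>U - U\<^sup>T\<close>, this is \<open>|A\<^sup>* w| \<le> 2 |w|\<close>: the vector
  \<open>A\<^sup>* w\<close> is the difference of truncations of the images of \<open>w\<close> under the unitaries
  \<open>U\<^sup>*\<close> and \<open>U\<^sup>T\<^sup>*\<close>.\<close>

lemma skew_block_adjoint_norm_le:
  assumes U: "unitary_mat d U" and d: "3 \<le> d"
  shows "(\<Sum>b<3. (cmod (\<Sum>a<3. cnj (U $$ (a,b) - U $$ (b,a)) * w a))\<^sup>2) \<le> 4 * (\<Sum>a<3. (cmod (w a))\<^sup>2)"
proof -
  have Uc: "U \<in> carrier_mat d d" and C1: "cadj U * U = 1\<^sub>m d" and R1: "U * cadj U = 1\<^sub>m d"
    using U by (auto simp: unitary_mat_def)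
  have rows: "(\<Sum>b<d. cnj (U $$ (a,b)) * cnj (cnj (U $$ (a',b)))) = (if a = a' then 1 else 0)"
    if "a < 3" "a' < 3" for a a'
  proof -
    have "(U * cadj U) $$ (a',a) = (\<Sum>b<d. U $$ (a',b) * cnj (U $$ (a,b)))"
      using Uc that d by (subst index_mult_mat_sum[of _ d d _ d]) auto
    then show ?thesis using R1 that d by (auto simp: mult.commute)
  qed
  have cols: "(\<Sum>b<d. cnj (U $$ (b,a)) * cnj (cnj (U $$ (b,a')))) = (if a = a' then 1 else 0)"
    if "a < 3" "a' < 3" for a a'
  proof -
    have "(cadj U * U) $$ (a,a') = (\<Sum>b<d. cnj (U $$ (b,a)) * U $$ (b,a'))"
      using Uc that d by (subst index_mult_mat_sum[of _ d d _ d]) auto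
    then show ?thesis using C1 that d by simp
  qed
  define p where "p b = (\<Sum>a<3. cnj (U $$ (a,b)) * w a)" for b
  define q where "q b = (\<Sum>a<3. cnj (U $$ (b,a)) * w a)" for b
  have "(\<Sum>b<3. (cmod (\<Sum>a<3. cnj (U $$ (a,b) - U $$ (b,a)) * w a))\<^sup>2) = (\<Sum>b<3. (cmod (p b - q b))\<^sup>2)"
    by (simp add: p_def q_def algebra_simps sum_subtractf)
  also have "\<dots> \<le> (\<Sum>b<3. 2 * (cmod (p b))\<^sup>2 + 2 * (cmod (q b))\<^sup>2)"
    by (rule sum_mono, rule cmod_diff_sq_le)
  also have "\<dots> \<le> (\<Sum>b<d. 2 * (cmod (p b))\<^sup>2 + 2 * (cmod (q b))\<^sup>2)"
    using d by (intro sum_mono2) auto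
  also have "\<dots> = 2 * (\<Sum>b<d. (cmod (p b))\<^sup>2) + 2 * (\<Sum>b<d. (cmod (q b))\<^sup>2)"
    by (simp add: sum.distrib sum_distrib_left)
  also have "\<dots> = 4 * (\<Sum>a<3. (cmod (w a))\<^sup>2)"
    unfolding p_def q_def using sum_cmod_sq_orthonormal[OF rows] sum_cmod_sq_orthonormal[OF cols] by simp
  finally show ?thesis .
qed

lemma antisym3_norms:
  fixes A :: "nat \<Rightarrow> nat \<Rightarrow> complex"
  assumes A: "\<And>a b. A b a = - A a b"
  defines "s \<equiv> (cmod (A 0 1))\<^sup>2 + (cmod (A 0 2))\<^sup>2 + (cmod (A 1 2))\<^sup>2"
  shows "(\<Sum>i<3. \<Sum>b<3. (cmod (\<Sum>a<3. cnj (A a b) * A a i))\<^sup>2) = 2 * s\<^sup>2"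
    and "(\<Sum>i<3. \<Sum>a<3. (cmod (A a i))\<^sup>2) = 2 * s"
proof -
  have diag: "A a a = 0" for a using A[of a a] by simp
  have cmod_sq: "cmod (x * cnj x + y * cnj y) = (cmod x)\<^sup>2 + (cmod y)\<^sup>2" for x y :: complex
  proof -
    have "x * cnj x + y * cnj y = complex_of_real ((cmod x)\<^sup>2 + (cmod y)\<^sup>2)"
      by (simp only: of_real_add complex_norm_square)
    then show ?thesis by (simp only: norm_of_real) simp
  qed
  note antisym = A[of 0 1, unfolded One_nat_def] A[of 0 2] A[of 1 2, unfolded One_nat_def]
  show "(\<Sum>i<3. \<Sum>a<3. (cmod (A a i))\<^sup>2) = 2 * s"
    unfolding s_def One_nat_def using antisym by (simp add: sum_lessThan_3 diag)
  show "(\<Sum>i<3. \<Sum>b<3. (cmod (\<Sum>a<3. cnj (A a b) * A a i))\<^sup>2) = 2 * s\<^sup>2"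
    unfolding s_def One_nat_def using antisym
    by (simp add: sum_lessThan_3 diag cmod_sq norm_mult power2_eq_square algebra_simps)
qed

lemma skew_defect_unitary_le:
  assumes U: "unitary_mat d U" and d: "3 \<le> d"
  shows "skew_defect U \<le> 4"
proof -
  define A where "A a b = U $$ (a,b) - U $$ (b,a)" for a b
  have "\<And>a b. A b a = - A a b" by (simp add: A_def)
  note norms = antisym3_norms[of A, OF this]
  have s: "skew_defect U = (cmod (A 0 1))\<^sup>2 + (cmod (A 0 2))\<^sup>2 + (cmod (A 1 2))\<^sup>2"
    by (simp add: skew_defect_def A_def)
  have "2 * (skew_defect U)\<^sup>2 = (\<Sum>i<3. \<Sum>b<3. (cmod (\<Sum>a<3. cnj (A a b) * A a i))\<^sup>2)"
    using norms(1) s by simp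
  also have "\<dots> \<le> (\<Sum>i<3::nat. 4 * (\<Sum>a<3. (cmod (A a i))\<^sup>2))"
    unfolding A_def by (intro sum_mono skew_block_adjoint_norm_le[OF U d])
  also have "\<dots> = 4 * (2 * skew_defect U)"
    using norms(2) s by (simp add: sum_distrib_left[symmetric])
  finally have "skew_defect U * skew_defect U \<le> 4 * skew_defect U"
    by (simp add: power2_eq_square)
  then show ?thesis
    using skew_defect_nonneg[of U] by (cases "skew_defect U = 0") (auto intro: mult_right_le_imp_le)
qed

lemma skew_witness_mixed_unitary_le:
  assumes "mixed_unitary d \<Psi>" and d: "3 \<le> d"
  shows "skew_witness d \<Psi> \<le> 4"
proof -
  obtain l lam U where lamU: "\<forall>j<l. lam j \<ge> 0 \<and> unitary_mat d (U j)" and lam1: "(\<Sum>j<l. lam j) = 1"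
    and \<Psi>: "\<forall>X \<in> carrier_mat d d. \<Psi> X = kraus_map d l lam U X"
    using assms(1) unfolding mixed_unitary_iff_kraus_map by blast
  have "skew_witness d \<Psi> = (\<Sum>j<l. lam j * skew_defect (U j))"
    using lamU \<Psi> by (intro skew_witness_kraus_map[OF d]) (auto simp: unitary_mat_def)
  also have "\<dots> \<le> (\<Sum>j<l. lam j * 4)"
    using lamU skew_defect_unitary_le[OF _ d] by (intro sum_mono mult_left_mono) auto
  also have "\<dots> = 4"
    using lam1 by (simp add: sum_distrib_right[symmetric])
  finally show ?thesis .
qed

section \<open>Block matrices and rotations\<close>

definition mult3 :: "(nat \<Rightarrow> nat \<Rightarrow> real) \<Rightarrow> (nat \<Rightarrow> nat \<Rightarrow> real) \<Rightarrow> nat \<Rightarrow> nat \<Rightarrow> real" where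
  "mult3 F G = (\<lambda>i j. \<Sum>k<3. F i k * G k j)"

lemma mult3_zero_left[simp]: "mult3 (\<lambda>i j. 0) F i j = 0"
  by (simp add: mult3_def)

definition block_mat :: "nat \<Rightarrow> (nat \<Rightarrow> nat \<Rightarrow> real) \<Rightarrow> complex \<Rightarrow> complex mat" where
  "block_mat d F c = mat d d (\<lambda>(i,j). if i < 3 \<and> j < 3 then complex_of_real (F i j) else if i = j then c else 0)"

lemma block_mat_carrier[simp]: "block_mat d F c \<in> carrier_mat d d"
  by (simp add: block_mat_def)

lemma dim_block_mat[simp]: "dim_row (block_mat d F c) = d" "dim_col (block_mat d F c) = d"
  by (simp_all add: block_mat_def)

lemma index_block_mat:
  "i < d \<Longrightarrow> j < d \<Longrightarrow>
    block_mat d F c $$ (i,j) = (if i < 3 \<and> j < 3 then complex_of_real (F i j) else if i = j then c else 0)"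
  by (simp add: block_mat_def)

lemma block_mat_cong:
  "(\<And>i j. i < 3 \<Longrightarrow> j < 3 \<Longrightarrow> F i j = G i j) \<Longrightarrow> c = c' \<Longrightarrow> block_mat d F c = block_mat d G c'"
  by (rule eq_matI) (auto simp: block_mat_def)

lemma block_mat_id: "block_mat d (\<lambda>i j. of_bool (i = j)) 1 = 1\<^sub>m d"
  by (rule eq_matI) (auto simp: block_mat_def)

lemma cadj_block_mat: "cadj (block_mat d F c) = block_mat d (\<lambda>i j. F j i) (cnj c)"
  by (rule eq_matI) (auto simp: block_mat_def)

lemma block_mat_mult:
  assumes d: "3 \<le> d"
  shows "block_mat d F c * block_mat d G e = block_mat d (mult3 F G) (c * e)"
proof (rule eq_matI)
  fix i j assume "i < dim_row (block_mat d (mult3 F G) (c * e))" "j < dim_col (block_mat d (mult3 F G) (c * e))"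
  then have i: "i < d" and j: "j < d" by auto
  have "(block_mat d F c * block_mat d G e) $$ (i,j) = (\<Sum>k<d. block_mat d F c $$ (i,k) * block_mat d G e $$ (k,j))"
    using i j by (subst index_mult_mat_sum[of _ d d _ d]) auto
  also have "\<dots> = block_mat d (mult3 F G) (c * e) $$ (i,j)"
  proof (cases "i < 3 \<and> j < 3")
    case True
    have "(\<Sum>k<d. block_mat d F c $$ (i,k) * block_mat d G e $$ (k,j))
        = (\<Sum>k<3. block_mat d F c $$ (i,k) * block_mat d G e $$ (k,j))"
      using True d i j by (intro sum.mono_neutral_right) (auto simp: index_block_mat)
    then show ?thesis
      using True d i j by (simp add: index_block_mat mult3_def)
  next
    case False
    then have "(\<Sum>k<d. block_mat d F c $$ (i,k) * block_mat d G e $$ (k,j))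
        = (\<Sum>k<d. if k = i then block_mat d F c $$ (i,i) * block_mat d G e $$ (i,j) else 0)"
      using i j by (intro sum.cong refl) (auto simp: index_block_mat)
    then show ?thesis
      using False i j by (auto simp: index_block_mat)
  qed
  finally show "(block_mat d F c * block_mat d G e) $$ (i,j) = block_mat d (mult3 F G) (c * e) $$ (i,j)" .
qed auto

lemma skew_defect_block_mat:
  "3 \<le> d \<Longrightarrow> skew_defect (block_mat d F c) = (F 0 1 - F 1 0)\<^sup>2 + (F 0 2 - F 2 0)\<^sup>2 + (F 1 2 - F 2 1)\<^sup>2"
  by (simp add: skew_defect_def index_block_mat flip: of_real_diff)

lemma kraus_map_block_mat_one:
  assumes d: "3 \<le> d"
  shows "kraus_map d m c (\<lambda>s. block_mat d (F s) (g s)) (1\<^sub>m d)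
    = block_mat d (\<lambda>i j. \<Sum>s<m. c s * mult3 (\<lambda>i j. F s j i) (F s) i j)
        (\<Sum>s<m. complex_of_real (c s) * (cnj (g s) * g s))"
proof (rule eq_matI)
  fix a b assume "a < dim_row (block_mat d (\<lambda>i j. \<Sum>s<m. c s * mult3 (\<lambda>i j. F s j i) (F s) i j)
        (\<Sum>s<m. complex_of_real (c s) * (cnj (g s) * g s)))"
    "b < dim_col (block_mat d (\<lambda>i j. \<Sum>s<m. c s * mult3 (\<lambda>i j. F s j i) (F s) i j)
        (\<Sum>s<m. complex_of_real (c s) * (cnj (g s) * g s)))"
  then have a: "a < d" and b: "b < d" by auto
  have "kraus_map d m c (\<lambda>s. block_mat d (F s) (g s)) (1\<^sub>m d) $$ (a,b)
      = (\<Sum>s<m. complex_of_real (c s) * block_mat d (mult3 (\<lambda>i j. F s j i) (F s)) (cnj (g s) * g s) $$ (a,b))"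
    using a b d by (simp add: index_kraus_map_one_mat cadj_block_mat block_mat_mult)
  also have "\<dots> = block_mat d (\<lambda>i j. \<Sum>s<m. c s * mult3 (\<lambda>i j. F s j i) (F s) i j)
        (\<Sum>s<m. complex_of_real (c s) * (cnj (g s) * g s)) $$ (a,b)"
    using a b by (auto simp: index_block_mat of_real_sum)
  finally show "kraus_map d m c (\<lambda>s. block_mat d (F s) (g s)) (1\<^sub>m d) $$ (a,b)
      = block_mat d (\<lambda>i j. \<Sum>s<m. c s * mult3 (\<lambda>i j. F s j i) (F s) i j)
        (\<Sum>s<m. complex_of_real (c s) * (cnj (g s) * g s)) $$ (a,b)" .
qed simp_all

definition rot3 :: "real \<Rightarrow> nat \<Rightarrow> nat \<Rightarrow> real" where
  "rot3 t i j = (if i = 0 \<and> j = 0 then cos t else if i = 0 \<and> j = 1 then - sin t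
     else if i = 1 \<and> j = 0 then sin t else if i = 1 \<and> j = 1 then cos t else if i = 2 \<and> j = 2 then 1 else 0)"

definition rot_mat :: "nat \<Rightarrow> real \<Rightarrow> complex mat" where
  "rot_mat d t = block_mat d (rot3 t) 1"

definition gen3 :: "nat \<Rightarrow> nat \<Rightarrow> nat \<Rightarrow> real" where
  "gen3 s i j = (if s = 1 then (if i = 0 \<and> j = 1 then 1 else if i = 1 \<and> j = 0 then -1 else 0)
     else if s = 2 then (if i = 0 \<and> j = 2 then 1 else if i = 2 \<and> j = 0 then -1 else 0)
     else (if i = 1 \<and> j = 2 then 1 else if i = 2 \<and> j = 1 then -1 else 0))"

lemma rot_mat_carrier[simp]: "rot_mat d t \<in> carrier_mat d d"
  by (simp add: rot_mat_def)

lemma dim_rot_mat[simp]: "dim_row (rot_mat d t) = d" "dim_col (rot_mat d t) = d"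
  by (simp_all add: rot_mat_def)

lemma rot_mat_add: "3 \<le> d \<Longrightarrow> rot_mat d a * rot_mat d b = rot_mat d (a + b)"
  unfolding rot_mat_def
  by (simp add: block_mat_mult, rule block_mat_cong)
    (auto dest!: less_3_cases simp: mult3_def sum_lessThan_3 rot3_def cos_add sin_add)

lemma rot_mat_zero: "rot_mat d 0 = 1\<^sub>m d"
  unfolding rot_mat_def block_mat_id[symmetric]
  by (rule block_mat_cong) (auto dest!: less_3_cases simp: rot3_def)

lemma rot_mat_pow: "3 \<le> d \<Longrightarrow> rot_mat d t ^\<^sub>m n = rot_mat d (real n * t)"
  by (induction n) (simp_all add: rot_mat_zero rot_mat_add distrib_right add.commute)

lemma rot3_orthogonal:
  assumes "a < 3" "b < 3"
  shows "mult3 (\<lambda>i j. rot3 t j i) (rot3 t) a b = of_bool (a = b)"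
    and "mult3 (rot3 t) (\<lambda>i j. rot3 t j i) a b = of_bool (a = b)"
  using less_3_cases[OF assms(1)] less_3_cases[OF assms(2)]
  by (elim disjE; simp add: mult3_def sum_lessThan_3 rot3_def algebra_simps sin_cos_squared_add3)+

lemma gen3_rot3_gram:
  assumes "a < 3" "b < 3"
  shows "(\<Sum>s\<in>{1,2,3}. mult3 (\<lambda>i j. mult3 (gen3 s) (rot3 t) j i) (mult3 (gen3 s) (rot3 t)) a b) = 2 * of_bool (a = b)"
    and "(\<Sum>s\<in>{1,2,3}. mult3 (mult3 (gen3 s) (rot3 t)) (\<lambda>i j. mult3 (gen3 s) (rot3 t) j i) a b) = 2 * of_bool (a = b)"
  using less_3_cases[OF assms(1)] less_3_cases[OF assms(2)]
  by (elim disjE; simp add: mult3_def sum_lessThan_3 rot3_def gen3_def algebra_simps sin_cos_squared_add3)+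

lemma skew_defect_rot_mat_pi_half: "3 \<le> d \<Longrightarrow> skew_defect (rot_mat d (pi/2)) = 4"
  unfolding rot_mat_def by (simp add: skew_defect_block_mat rot3_def)

lemma skew_defect_rot_mat_conj_gen3:
  assumes d: "3 \<le> d" and s: "s \<in> {1,2,3}"
  shows "skew_defect (rot_mat d t * block_mat d (gen3 s) 0 * rot_mat d (- t)) = 4"
proof -
  define F where "F = mult3 (mult3 (rot3 t) (gen3 s)) (rot3 (-t))"
  have "rot_mat d t * block_mat d (gen3 s) 0 * rot_mat d (- t) = block_mat d F 0"
    unfolding rot_mat_def F_def using d by (simp add: block_mat_mult)
  then have defect: "skew_defect (rot_mat d t * block_mat d (gen3 s) 0 * rot_mat d (- t))
      = (F 0 1 - F 1 0)\<^sup>2 + (F 0 2 - F 2 0)\<^sup>2 + (F 1 2 - F 2 1)\<^sup>2"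
    using d by (simp add: skew_defect_block_mat)
  have pyth: "(cos t)\<^sup>2 + (sin t)\<^sup>2 = 1" by simp
  consider "s = 1" | "s = 2" | "s = 3" using s by auto
  then show ?thesis
  proof cases
    case 1
    have "F 0 1 - F 1 0 = 2 * (cos t)\<^sup>2 + 2 * (sin t)\<^sup>2" "F 0 2 - F 2 0 = 0" "F 1 2 - F 2 1 = 0"
      unfolding F_def mult3_def by (simp_all add: 1 sum_lessThan_3 rot3_def gen3_def power2_eq_square)
    then show ?thesis using defect pyth by (simp flip: distrib_left)
  next
    case 2
    have "F 0 1 - F 1 0 = 0" "F 0 2 - F 2 0 = 2 * cos t" "F 1 2 - F 2 1 = 2 * sin t"
      unfolding F_def mult3_def by (simp_all add: 2 sum_lessThan_3 rot3_def gen3_def)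
    then show ?thesis using defect pyth by (simp add: power_mult_distrib flip: distrib_left)
  next
    case 3
    have "F 0 1 - F 1 0 = 0" "F 0 2 - F 2 0 = - 2 * sin t" "F 1 2 - F 2 1 = 2 * cos t"
      unfolding F_def mult3_def by (simp_all add: 3 sum_lessThan_3 rot3_def gen3_def)
    then show ?thesis using defect pyth by (simp add: power_mult_distrib add.commute flip: distrib_left)
  qed
qed

section \<open>A unital channel whose N-th power is not mixed unitary\<close>

definition rot_noise_block :: "real \<Rightarrow> real \<Rightarrow> nat \<Rightarrow> nat \<Rightarrow> nat \<Rightarrow> real" where
  "rot_noise_block \<alpha> \<beta> s = (if s = 0 then rot3 \<alpha> else if s < 4 then mult3 (gen3 s) (rot3 \<beta>) else (\<lambda>_ _. 0))"

definition rot_noise_op :: "nat \<Rightarrow> real \<Rightarrow> real \<Rightarrow> nat \<Rightarrow> complex mat" where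
  "rot_noise_op d \<alpha> \<beta> s = block_mat d (rot_noise_block \<alpha> \<beta> s) (if s = 0 \<or> 4 \<le> s then 1 else 0)"

definition rot_noise_weight :: "real \<Rightarrow> nat \<Rightarrow> real" where
  "rot_noise_weight e s = (if s = 0 then 1 - e else if s < 4 then e / 2 else e)"

lemma rot_noise_op_carrier[simp]: "rot_noise_op d \<alpha> \<beta> s \<in> carrier_mat d d"
  by (simp add: rot_noise_op_def)

lemma rot_noise_block_gram:
  assumes "a < 3" "b < 3"
  shows "(\<Sum>s<5. rot_noise_weight e s * mult3 (\<lambda>i j. rot_noise_block \<alpha> \<beta> s j i) (rot_noise_block \<alpha> \<beta> s) a b)
      = of_bool (a = b)"
    and "(\<Sum>s<5. rot_noise_weight e s * mult3 (rot_noise_block \<alpha> \<beta> s) (\<lambda>i j. rot_noise_block \<alpha> \<beta> s j i) a b)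
      = of_bool (a = b)"
proof -
  have "(\<Sum>s<5. rot_noise_weight e s * mult3 (\<lambda>i j. rot_noise_block \<alpha> \<beta> s j i) (rot_noise_block \<alpha> \<beta> s) a b)
      = (1 - e) * mult3 (\<lambda>i j. rot3 \<alpha> j i) (rot3 \<alpha>) a b
        + e / 2 * (\<Sum>s\<in>{1,2,3}. mult3 (\<lambda>i j. mult3 (gen3 s) (rot3 \<beta>) j i) (mult3 (gen3 s) (rot3 \<beta>)) a b)"
    by (simp add: sum_lessThan_5 rot_noise_block_def rot_noise_weight_def algebra_simps)
  also have "\<dots> = of_bool (a = b)"
    by (simp only: rot3_orthogonal(1)[OF assms] gen3_rot3_gram(1)[OF assms]) simp
  finally show "(\<Sum>s<5. rot_noise_weight e s * mult3 (\<lambda>i j. rot_noise_block \<alpha> \<beta> s j i) (rot_noise_block \<alpha> \<beta> s) a b)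
      = of_bool (a = b)" .
  have "(\<Sum>s<5. rot_noise_weight e s * mult3 (rot_noise_block \<alpha> \<beta> s) (\<lambda>i j. rot_noise_block \<alpha> \<beta> s j i) a b)
      = (1 - e) * mult3 (rot3 \<alpha>) (\<lambda>i j. rot3 \<alpha> j i) a b
        + e / 2 * (\<Sum>s\<in>{1,2,3}. mult3 (mult3 (gen3 s) (rot3 \<beta>)) (\<lambda>i j. mult3 (gen3 s) (rot3 \<beta>) j i) a b)"
    by (simp add: sum_lessThan_5 rot_noise_block_def rot_noise_weight_def algebra_simps)
  also have "\<dots> = of_bool (a = b)"
    by (simp only: rot3_orthogonal(2)[OF assms] gen3_rot3_gram(2)[OF assms]) simp
  finally show "(\<Sum>s<5. rot_noise_weight e s * mult3 (rot_noise_block \<alpha> \<beta> s) (\<lambda>i j. rot_noise_block \<alpha> \<beta> s j i) a b)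
      = of_bool (a = b)" .
qed

lemma unital_channel_rot_noise:
  assumes d: "3 \<le> d" and e: "0 \<le> e" "e \<le> 1"
  shows "unital_channel d (kraus_map d 5 (rot_noise_weight e) (rot_noise_op d \<alpha> \<beta>))"
proof (rule unital_channel_kraus_map)
  show "rot_noise_op d \<alpha> \<beta> j \<in> carrier_mat d d" for j
    by simp
  show "0 \<le> rot_noise_weight e j" for j
    using e by (simp add: rot_noise_weight_def)
  show "kraus_map d 5 (rot_noise_weight e) (rot_noise_op d \<alpha> \<beta>) (1\<^sub>m d) = 1\<^sub>m d"
    unfolding rot_noise_op_def kraus_map_block_mat_one[OF d]
    by (subst block_mat_id[symmetric], rule block_mat_cong)
      (simp add: rot_noise_block_gram, simp add: sum_lessThan_5 rot_noise_weight_def)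
  have cadj_rot_noise_op: "(\<lambda>s. cadj (rot_noise_op d \<alpha> \<beta> s))
      = (\<lambda>s. block_mat d (\<lambda>i j. rot_noise_block \<alpha> \<beta> s j i) (cnj (if s = 0 \<or> 4 \<le> s then 1 else 0)))"
    by (simp add: rot_noise_op_def cadj_block_mat)
  show "kraus_map d 5 (rot_noise_weight e) (\<lambda>s. cadj (rot_noise_op d \<alpha> \<beta> s)) (1\<^sub>m d) = 1\<^sub>m d"
    unfolding cadj_rot_noise_op kraus_map_block_mat_one[OF d]
    by (subst block_mat_id[symmetric], rule block_mat_cong)
      (simp add: rot_noise_block_gram, simp add: sum_lessThan_5 rot_noise_weight_def)
qed

lemma rot_noise_op_zero: "rot_noise_op d \<alpha> \<beta> 0 = rot_mat d \<alpha>"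
  by (simp add: rot_noise_op_def rot_noise_block_def rot_mat_def)

lemma rot_noise_op_gen3: "3 \<le> d \<Longrightarrow> s \<in> {1,2,3} \<Longrightarrow> rot_noise_op d \<alpha> \<beta> s = block_mat d (gen3 s) 0 * rot_mat d \<beta>"
  by (auto simp: rot_noise_op_def rot_noise_block_def rot_mat_def block_mat_mult)

lemma word_mat_rot_noise_zero:
  "3 \<le> d \<Longrightarrow> word_mat d 5 (rot_noise_op d \<alpha> \<beta>) N 0 = rot_mat d (real N * \<alpha>)"
  by (simp add: word_mat_zero rot_noise_op_zero rot_mat_pow)

lemma word_mat_rot_noise_single_letter:
  assumes d: "3 \<le> d" and j: "j \<in> {1,2,3}" and q: "q < N" and \<beta>: "\<beta> = (1 - real N) * \<alpha>"
  defines "t \<equiv> real (N - 1 - q) * \<alpha>"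
  shows "word_mat d 5 (rot_noise_op d \<alpha> \<beta>) N (j * 5^q) = rot_mat d t * block_mat d (gen3 j) 0 * rot_mat d (- t)"
proof -
  let ?K = "rot_noise_op d \<alpha> \<beta>"
  have "word_mat d 5 ?K N (j * 5^q) = ?K 0 ^\<^sub>m (N - 1 - q) * ?K j * ?K 0 ^\<^sub>m q"
    using j q by (intro word_mat_single_letter) auto
  also have "\<dots> = rot_mat d t * (block_mat d (gen3 j) 0 * rot_mat d \<beta>) * rot_mat d (real q * \<alpha>)"
    using d j by (simp add: rot_noise_op_zero rot_noise_op_gen3 rot_mat_pow t_def)
  also have "\<dots> = rot_mat d t * block_mat d (gen3 j) 0 * rot_mat d (\<beta> + real q * \<alpha>)"
    using d by (simp add: rot_mat_add assoc_mult_mat[of _ d d _ d _ d])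
  also have "\<beta> + real q * \<alpha> = - t"
    using q by (simp add: t_def \<beta> of_nat_diff algebra_simps)
  finally show ?thesis .
qed

lemma skew_witness_rot_noise_power_ge:
  assumes d: "3 \<le> d" and e: "0 \<le> e" "e \<le> 1" and N: "1 \<le> N"
    and \<alpha>: "\<alpha> = pi / (2 * real N)" and \<beta>: "\<beta> = (1 - real N) * \<alpha>"
  shows "4 * (1 - e)^N + 6 * real N * e * (1 - e)^(N - 1)
    \<le> skew_witness d (kraus_map d 5 (rot_noise_weight e) (rot_noise_op d \<alpha> \<beta>) ^^ N)"
proof -
  let ?K = "rot_noise_op d \<alpha> \<beta>" and ?w = "rot_noise_weight e"
  define f where "f u = word_weight 5 ?w N u * skew_defect (word_mat d 5 ?K N u)" for u
  have K: "\<And>j. j < 5 \<Longrightarrow> ?K j \<in> carrier_mat d d"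
    by simp
  have w: "\<And>s. s < 5 \<Longrightarrow> 0 \<le> ?w s"
    using e by (simp add: rot_noise_weight_def)
  have witness: "skew_witness d (kraus_map d 5 ?w ?K ^^ N) = (\<Sum>u<5^N. f u)"
    unfolding f_def using K by (intro skew_witness_kraus_map[OF d]) (auto intro: word_mat_carrier funpow_kraus_map)
  have N\<alpha>: "real N * \<alpha> = pi / 2"
    using N by (simp add: \<alpha>)
  have f0: "f 0 = 4 * (1 - e)^N"
    using d word_mat_rot_noise_zero[OF d, of \<alpha> \<beta> N, unfolded N\<alpha>]
    by (simp add: f_def word_weight_zero skew_defect_rot_mat_pi_half rot_noise_weight_def)
  have f_single: "f (j * 5^q) = 2 * e * (1 - e)^(N - 1)" if j: "j \<in> {1,2,3}" and q: "q < N" for j q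
  proof -
    have "word_weight 5 ?w N (j * 5^q) = (1 - e)^(N - 1) * (e / 2)"
      using j q by (subst word_weight_single_letter) (auto simp: rot_noise_weight_def)
    then show ?thesis
      using d j word_mat_rot_noise_single_letter[OF d j q \<beta>]
      by (simp add: f_def skew_defect_rot_mat_conj_gen3 mult_ac)
  qed
  have "f 0 + (\<Sum>q<N. \<Sum>j\<in>{1,2,3}. f (j * 5^q)) \<le> (\<Sum>u<5^N. f u)"
    using w by (intro sum_words_ge_single_letters)
      (auto simp: f_def intro!: mult_nonneg_nonneg word_weight_nonneg skew_defect_nonneg)
  then show ?thesis
    using witness f0 f_single by simp
qed

lemma rot_noise_eps_bounds:
  fixes N :: nat
  assumes "1 \<le> N"
  shows "0 < 1 / (3 * (real N)\<^sup>2)" and "1 / (3 * (real N)\<^sup>2) \<le> 1/3"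
proof -
  have "1 \<le> real N" using assms by simp
  then show "0 < 1 / (3 * (real N)\<^sup>2)" "1 / (3 * (real N)\<^sup>2) \<le> 1/3"
    by (simp_all add: field_simps one_le_power)
qed

lemma rot_noise_bound_gt_4:
  fixes N :: nat
  assumes N: "1 \<le> N"
  defines "e \<equiv> 1 / (3 * (real N)\<^sup>2)"
  shows "4 < 4 * (1 - e)^N + 6 * real N * e * (1 - e)^(N - 1)"
proof -
  define n where "n = real N"
  obtain K where K: "N = Suc K" using N by (cases N) auto
  have n1: "n \<ge> 1" and nK: "n = real K + 1" using N K by (simp_all add: n_def)
  have e_pos: "e > 0" and e_le: "e \<le> 1/3"
    using rot_noise_eps_bounds[OF N] by (simp_all add: e_def)
  have "(1 - e)^K \<ge> 1 - real K * e"
    using Bernoulli_inequality[of "-e" K] e_le by simp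
  then have "(1 - e)^K * (4 * (1 - e) + 6 * n * e) \<ge> (1 - real K * e) * (4 * (1 - e) + 6 * n * e)"
    using e_pos e_le n1 by (intro mult_right_mono) auto
  moreover have "4 * (1 - e)^N + 6 * real N * e * (1 - e)^(N - 1) = (1 - e)^K * (4 * (1 - e) + 6 * n * e)"
    using K by (simp add: n_def algebra_simps)
  moreover have "(1 - real K * e) * (4 * (1 - e) + 6 * n * e) = 4 + 2 * n * e - real K * (6 * n - 4) * e\<^sup>2"
    using nK by (simp add: algebra_simps power2_eq_square)
  moreover have "real K * (6 * n - 4) * e < 2 * n"
  proof -
    have "real K * (6 * n - 4) = 6 * n\<^sup>2 - 10 * n + 4"
      using nK by (simp add: algebra_simps power2_eq_square)
    also have "\<dots> < 6 * n\<^sup>2" using n1 by simp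
    finally have "real K * (6 * n - 4) * e < 6 * n\<^sup>2 * e"
      using e_pos by simp
    also have "\<dots> = 2" using n1 by (simp add: e_def n_def)
    also have "\<dots> \<le> 2 * n" using n1 by simp
    finally show ?thesis .
  qed
  then have "real K * (6 * n - 4) * e * e < 2 * n * e"
    using e_pos by (rule mult_strict_right_mono)
  then have "real K * (6 * n - 4) * e\<^sup>2 < 2 * n * e"
    by (simp add: power2_eq_square mult.assoc)
  ultimately show ?thesis by linarith
qed

theorem theorem4p8:
  fixes d :: nat
  assumes "d \<ge> 3"
  shows "\<not> (\<exists>n::nat. n \<ge> 1 \<and> (\<forall>\<Phi>. unital_channel d \<Phi> \<longrightarrow> mixed_unitary d (\<Phi> ^^ n)))"
proof
  assume "\<exists>n::nat. n \<ge> 1 \<and> (\<forall>\<Phi>. unital_channel d \<Phi> \<longrightarrow> mixed_unitary d (\<Phi> ^^ n))"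
  then obtain N :: nat where N: "1 \<le> N"
    and power_mixed_unitary: "\<And>\<Phi>. unital_channel d \<Phi> \<Longrightarrow> mixed_unitary d (\<Phi> ^^ N)"
    by blast
  have d: "3 \<le> d" using assms by simp
  define e where "e = 1 / (3 * (real N)\<^sup>2)"
  define \<alpha> where "\<alpha> = pi / (2 * real N)"
  define \<Phi> where "\<Phi> = kraus_map d 5 (rot_noise_weight e) (rot_noise_op d \<alpha> ((1 - real N) * \<alpha>))"
  have e: "0 \<le> e" "e \<le> 1"
    unfolding e_def using rot_noise_eps_bounds[OF N] by linarith+
  have "mixed_unitary d (\<Phi> ^^ N)"
    unfolding \<Phi>_def by (intro power_mixed_unitary unital_channel_rot_noise d e)
  then have "skew_witness d (\<Phi> ^^ N) \<le> 4"
    using d by (rule skew_witness_mixed_unitary_le)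
  moreover have "4 < skew_witness d (\<Phi> ^^ N)"
    using rot_noise_bound_gt_4[OF N] skew_witness_rot_noise_power_ge[OF d e N \<alpha>_def refl]
    unfolding \<Phi>_def e_def by linarith
  ultimately show False by simp
qed

end
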